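(* If $G$ is a (finite, simple, connected) block graph, then $\mathrm{mob}(G)=\omega(G)$.
   Context: A block graph is a connected graph in which every block (maximal 2-connected subgraph or bridge) is a complete graph. $\omega(G)$ is the clique number. A set $S$ of vertices is a general position set if no three distinct vertices of $S$ lie on a common shortest path. Place one robot on each vertex of a general position set $S$; robots move one at a time, and a move is legal if a robot moves to an adjacent unoccupied vertex and the new set of occupied vertices is again a general position set. $S$ is a mobile general position set if some finite sequence of legal moves results in every vertex of $G$ being occupied by some robot at some moment. $\mathrm{mob}(G)$ is the maximum cardinality of a mobile general position set of $G$. *)

theory Defs
  imports Main
begin

definition simple_graph :: "'a set \<Rightarrow> ('a \<Rightarrow> 'a \<Rightarrow> bool) \<Rightarrow> bool" where
  "simple_graph V E \<longleftrightarrow> finite V \<and> (\<forall>u v. E u v \<longrightarrow> u \<in> V \<and> v \<in> V)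
     \<and> (\<forall>u v. E u v \<longrightarrow> E v u) \<and> (\<forall>u. \<not> E u u)"

definition walk_in :: "'a set \<Rightarrow> ('a \<Rightarrow> 'a \<Rightarrow> bool) \<Rightarrow> 'a list \<Rightarrow> bool" where
  "walk_in W E p \<longleftrightarrow> p \<noteq> [] \<and> set p \<subseteq> W \<and> (\<forall>i. Suc i < length p \<longrightarrow> E (p ! i) (p ! Suc i))"

definition connected_on :: "'a set \<Rightarrow> ('a \<Rightarrow> 'a \<Rightarrow> bool) \<Rightarrow> bool" where
  "connected_on W E \<longleftrightarrow> (\<forall>u\<in>W. \<forall>v\<in>W. \<exists>p. walk_in W E p \<and> hd p = u \<and> last p = v)"

definition connected_graph :: "'a set \<Rightarrow> ('a \<Rightarrow> 'a \<Rightarrow> bool) \<Rightarrow> bool" where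
  "connected_graph V E \<longleftrightarrow> simple_graph V E \<and> V \<noteq> {} \<and> connected_on V E"

definition shortest_path :: "'a set \<Rightarrow> ('a \<Rightarrow> 'a \<Rightarrow> bool) \<Rightarrow> 'a list \<Rightarrow> bool" where
  "shortest_path V E p \<longleftrightarrow> walk_in V E p \<and>
     (\<forall>q. walk_in V E q \<and> hd q = hd p \<and> last q = last p \<longrightarrow> length p \<le> length q)"

definition gp_set :: "'a set \<Rightarrow> ('a \<Rightarrow> 'a \<Rightarrow> bool) \<Rightarrow> 'a set \<Rightarrow> bool" where
  "gp_set V E S \<longleftrightarrow> S \<subseteq> V \<and>
     \<not> (\<exists>x\<in>S. \<exists>y\<in>S. \<exists>z\<in>S. x \<noteq> y \<and> y \<noteq> z \<and> x \<noteq> z \<and>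
          (\<exists>p. shortest_path V E p \<and> x \<in> set p \<and> y \<in> set p \<and> z \<in> set p))"

definition legal_move :: "'a set \<Rightarrow> ('a \<Rightarrow> 'a \<Rightarrow> bool) \<Rightarrow> 'a set \<Rightarrow> 'a set \<Rightarrow> bool" where
  "legal_move V E S S' \<longleftrightarrow> (\<exists>u v. u \<in> S \<and> v \<notin> S \<and> E u v \<and> S' = insert v (S - {u})
     \<and> gp_set V E S')"

definition mobile_gp_set :: "'a set \<Rightarrow> ('a \<Rightarrow> 'a \<Rightarrow> bool) \<Rightarrow> 'a set \<Rightarrow> bool" where
  "mobile_gp_set V E S \<longleftrightarrow> gp_set V E S \<and>
     (\<exists>cs. cs \<noteq> [] \<and> hd cs = S \<and>
        (\<forall>i. Suc i < length cs \<longrightarrow> legal_move V E (cs ! i) (cs ! Suc i)) \<and>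
        V \<subseteq> \<Union> (set cs))"

definition mob :: "'a set \<Rightarrow> ('a \<Rightarrow> 'a \<Rightarrow> bool) \<Rightarrow> nat" where
  "mob V E = Max {card S | S. mobile_gp_set V E S}"

definition is_clique :: "'a set \<Rightarrow> ('a \<Rightarrow> 'a \<Rightarrow> bool) \<Rightarrow> 'a set \<Rightarrow> bool" where
  "is_clique V E K \<longleftrightarrow> K \<subseteq> V \<and> (\<forall>u\<in>K. \<forall>v\<in>K. u \<noteq> v \<longrightarrow> E u v)"

definition clique_number :: "'a set \<Rightarrow> ('a \<Rightarrow> 'a \<Rightarrow> bool) \<Rightarrow> nat" where
  "clique_number V E = Max {card K | K. is_clique V E K}"

(* vertex sets of connected subgraphs with at least two vertices and no cut vertex:
   these are the vertex sets of edges (K2) and of 2-connected subgraphs *)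
definition nonseparable :: "'a set \<Rightarrow> ('a \<Rightarrow> 'a \<Rightarrow> bool) \<Rightarrow> 'a set \<Rightarrow> bool" where
  "nonseparable V E B \<longleftrightarrow> B \<subseteq> V \<and> 2 \<le> card B \<and> connected_on B E \<and>
     (\<forall>x\<in>B. connected_on (B - {x}) E)"

(* a block: maximal 2-connected subgraph or bridge (given by its vertex set; blocks are induced) *)
definition is_block :: "'a set \<Rightarrow> ('a \<Rightarrow> 'a \<Rightarrow> bool) \<Rightarrow> 'a set \<Rightarrow> bool" where
  "is_block V E B \<longleftrightarrow> nonseparable V E B \<and> (\<forall>B'. nonseparable V E B' \<and> B \<subseteq> B' \<longrightarrow> B' = B)"

definition block_graph :: "'a set \<Rightarrow> ('a \<Rightarrow> 'a \<Rightarrow> bool) \<Rightarrow> bool" where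
  "block_graph V E \<longleftrightarrow> connected_graph V E \<and> (\<forall>B. is_block V E B \<longrightarrow> is_clique V E B)"

end

theory Submission
  imports Defs "HOL-Library.Transitive_Closure_Table"
begin

text \<open>
  Lower bound: let \<open>K\<close> be a maximal clique. Seen from any vertex \<open>p\<close>, the vertex \<open>c\<close> of
  \<open>K\<close> nearest to \<open>p\<close> is unique and the other vertices of \<open>K\<close> are one step farther, since
  a second nearest vertex would share with \<open>c\<close> a predecessor that extends \<open>K\<close>. Hence
  \<open>insert p (K - {c})\<close> is in general position, and the robot on \<open>c\<close> walks to \<open>p\<close> along
  a shortest path through such positions; so \<open>K\<close> is mobile.

  Upper bound: when a robot stands on \<open>x\<close>, all other robots lie in one component of
  \<open>G - x\<close>, as \<open>x\<close> is on no shortest path between two of them. With at least three robots,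
  ``all robots but at most one lie in the component \<open>C\<close> of \<open>G - x\<close>'' is preserved by legal
  moves, so every vertex \<open>x\<close> has such a heavy component \<open>H x\<close>. A maximal clique \<open>K\<close> of
  least total distance to the robots satisfies \<open>K - {c} \<subseteq> H c\<close> for all \<open>c \<in> K\<close>, and
  every robot off \<open>K\<close> lies outside \<open>H c\<close> for some \<open>c \<in> K\<close>. Since at most one robot,
  counting one on \<open>c\<close>, lies outside \<open>H c\<close>, there are at most \<open>card K\<close> robots.

  The only property of block graphs used is that \<open>x\<close> separates any two non-adjacent
  neighbours of \<open>x\<close>.
\<close>

lemma successively_relpowp:
  assumes "successively R cs" "i \<le> l" "l < length cs"
  shows "(R ^^ (l - i)) (cs ! i) (cs ! l)"
  using assms(2,3)
proof (induction l)
  case (Suc l)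
  show ?case
  proof (cases "i = Suc l")
    case False
    with Suc have "(R ^^ (l - i)) (cs ! i) (cs ! l)" by simp
    moreover have "R (cs ! l) (cs ! Suc l)" using assms(1) Suc.prems by (simp add: successively_nth)
    ultimately have "(R ^^ Suc (l - i)) (cs ! i) (cs ! Suc l)" by (rule relpowp_Suc_I)
    then show ?thesis using False Suc.prems by (simp add: Suc_diff_le)
  qed simp
qed simp

lemma relpowp_imp_successively:
  assumes "(R ^^ n) a b"
  obtains cs where "successively R cs" "hd cs = a" "last cs = b" "length cs = Suc n"
  using assms
proof (induction n arbitrary: b thesis)
  case 0
  then show ?case using "0.prems"(1)[of "[a]"] by simp
next
  case (Suc n)
  from \<open>(R ^^ Suc n) a b\<close> obtain y where "(R ^^ n) a y" "R y b" by (rule relpowp_Suc_E)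
  from Suc.IH[OF _ this(1)] obtain cs where
    cs: "successively R cs" "hd cs = a" "last cs = y" "length cs = Suc n" by blast
  have "cs \<noteq> []" using cs(4) by auto
  then show ?case
    using Suc.prems(1)[of "cs @ [b]"] cs \<open>R y b\<close> by (simp add: successively_append_iff hd_append)
qed

lemma successively_rtranclp:
  assumes "successively R cs" "x \<in> set cs"
  shows "R\<^sup>*\<^sup>* (hd cs) x"
proof -
  obtain l where l: "l < length cs" "cs ! l = x" using assms(2) by (auto simp: in_set_conv_nth)
  then have "(R ^^ (l - 0)) (cs ! 0) (cs ! l)" using successively_relpowp[OF assms(1)] by blast
  then show ?thesis using l by (metis hd_conv_nth list.size(3) not_less0 relpowp_imp_rtranclp)
qed

lemma rtrancl_path_successively:
  "rtrancl_path R x xs y \<Longrightarrow> successively R (x # xs) \<and> last (x # xs) = y"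
  by (induction rule: rtrancl_path.induct) auto

lemma symp_rtranclp_tour:
  assumes "symp R" "finite \<T>" "\<forall>T\<in>\<T>. R\<^sup>*\<^sup>* a T"
  obtains cs where "cs \<noteq> []" "hd cs = a" "successively R cs" "\<T> \<subseteq> set cs"
  using assms(2,3)
proof (induction arbitrary: thesis rule: finite_induct)
  case empty
  then show ?case using empty.prems(1)[of "[a]"] by simp
next
  case (insert T \<T>)
  then obtain cs where cs: "cs \<noteq> []" "hd cs = a" "successively R cs" "\<T> \<subseteq> set cs" by blast
  have "R\<^sup>*\<^sup>* (last cs) a"
    using successively_rtranclp[OF cs(3) last_in_set[OF cs(1)]] cs(2) assms(1)
    by (metis sympD symp_rtranclp)
  then have "R\<^sup>*\<^sup>* (last cs) T" using insert.prems(2) by auto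
  then obtain n where "(R ^^ n) (last cs) T" using rtranclp_imp_relpowp by metis
  then obtain ds where ds: "successively R ds" "hd ds = last cs" "last ds = T" "length ds = Suc n"
    by (rule relpowp_imp_successively)
  then obtain ds' where ds': "ds = last cs # ds'" by (cases ds) auto
  have "successively R (cs @ ds')"
    using cs ds ds' by (auto simp: successively_append_iff successively_Cons)
  moreover have "insert T \<T> \<subseteq> set (cs @ ds')"
    using cs(1,4) ds(3) ds' by (cases "ds' = []") auto
  ultimately show ?case using insert.prems(1)[of "cs @ ds'"] cs by (simp add: hd_append)
qed

lemma sum_less_by_majority:
  fixes f g :: "'a \<Rightarrow> nat"
  assumes "finite S" and less: "\<forall>s\<in>S \<inter> A. f s < g s" and le: "\<forall>s\<in>S - A. f s \<le> Suc (g s)"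
    and "card (S - A) < card (S \<inter> A)"
  shows "sum f S < sum g S"
proof -
  have "(\<Sum>s\<in>S \<inter> A. Suc (f s)) \<le> sum g (S \<inter> A)"
    using less by (intro sum_mono) (auto simp: Suc_le_eq)
  moreover have "sum f (S - A) \<le> (\<Sum>s\<in>S - A. Suc (g s))" using le by (intro sum_mono) auto
  ultimately have "sum f (S \<inter> A) + card (S \<inter> A) \<le> sum g (S \<inter> A)"
    "sum f (S - A) \<le> sum g (S - A) + card (S - A)"
    by (simp_all add: sum_Suc)
  moreover have "sum f S = sum f (S \<inter> A) + sum f (S - A)" "sum g S = sum g (S \<inter> A) + sum g (S - A)"
    using assms(1) by (simp_all add: sum.Int_Diff)
  ultimately show ?thesis using assms(4) by linarith
qed

definition adj_in :: "('a \<Rightarrow> 'a \<Rightarrow> bool) \<Rightarrow> 'a set \<Rightarrow> 'a \<Rightarrow> 'a \<Rightarrow> bool" where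
  "adj_in E W u v \<longleftrightarrow> E u v \<and> u \<in> W \<and> v \<in> W"

lemma walk_in_iff_successively:
  "walk_in W E p \<longleftrightarrow> p \<noteq> [] \<and> set p \<subseteq> W \<and> successively E p"
  unfolding walk_in_def successively_conv_nth by simp

lemma walk_in_iff_adj_in:
  "walk_in W E p \<longleftrightarrow> p \<noteq> [] \<and> hd p \<in> W \<and> successively (adj_in E W) p"
  by (induction p) (auto simp: walk_in_iff_successively successively_Cons adj_in_def)

lemma walk_in_Cons:
  "walk_in W E (x # p) \<longleftrightarrow> x \<in> W \<and> (p = [] \<or> E x (hd p) \<and> walk_in W E p)"
  by (auto simp: walk_in_iff_successively successively_Cons)

lemma walk_in_mono: "walk_in W E p \<Longrightarrow> set p \<subseteq> W' \<Longrightarrow> walk_in W' E p"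
  by (simp add: walk_in_iff_successively)

lemma walk_in_rev:
  assumes "symp E" shows "walk_in W E (rev p) \<longleftrightarrow> walk_in W E p"
proof -
  have "(\<lambda>x y. E y x) = E" using assms by (auto dest: sympD)
  then have "successively E (rev p) \<longleftrightarrow> successively E p" by (metis successively_rev)
  then show ?thesis by (simp add: walk_in_iff_successively)
qed

lemma walk_in_take: "walk_in W E p \<Longrightarrow> 0 < n \<Longrightarrow> walk_in W E (take n p)"
  unfolding walk_in_iff_successively
  by (metis append_take_drop_id set_take_subset successively_append_iff take_eq_Nil2
      bot_nat_0.not_eq_extremum order_trans)

lemma walk_in_drop: "walk_in W E p \<Longrightarrow> n < length p \<Longrightarrow> walk_in W E (drop n p)"
  unfolding walk_in_iff_successively
  by (metis append_take_drop_id set_drop_subset successively_append_iff drop_eq_Nil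
      not_le order_trans)

lemma walk_in_relpowp:
  "walk_in W E p \<Longrightarrow> i \<le> l \<Longrightarrow> l < length p \<Longrightarrow> (adj_in E W ^^ (l - i)) (p ! i) (p ! l)"
  unfolding walk_in_iff_adj_in by (blast intro: successively_relpowp)

lemma relpowp_imp_walk_in:
  assumes "(adj_in E W ^^ n) u v" "u \<in> W"
  obtains p where "walk_in W E p" "hd p = u" "last p = v" "length p = Suc n"
  by (metis assms relpowp_imp_successively walk_in_iff_adj_in list.size(3) nat.distinct(1))

lemma walk_in_rtranclp: "walk_in W E p \<Longrightarrow> x \<in> set p \<Longrightarrow> (adj_in E W)\<^sup>*\<^sup>* (hd p) x"
  unfolding walk_in_iff_adj_in by (blast intro: successively_rtranclp)

lemma rtranclp_imp_distinct_walk_in: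
  assumes "(adj_in E W)\<^sup>*\<^sup>* u v" "u \<in> W"
  obtains p where "walk_in W E p" "distinct p" "hd p = u" "last p = v"
proof -
  obtain xs where "rtrancl_path (adj_in E W) u xs v"
    using assms(1) rtranclp_eq_rtrancl_path by metis
  then obtain xs' where "rtrancl_path (adj_in E W) u xs' v" "distinct (u # xs')"
    by (rule rtrancl_path_distinct)
  then show ?thesis
    using that[of "u # xs'"] assms(2) rtrancl_path_successively walk_in_iff_adj_in by fastforce
qed

lemma connected_on_iff_rtranclp:
  "connected_on W E \<longleftrightarrow> (\<forall>u\<in>W. \<forall>v\<in>W. (adj_in E W)\<^sup>*\<^sup>* u v)"
proof
  assume "connected_on W E"
  then show "\<forall>u\<in>W. \<forall>v\<in>W. (adj_in E W)\<^sup>*\<^sup>* u v"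
    unfolding connected_on_def by (metis walk_in_rtranclp last_in_set walk_in_def)
next
  assume reach: "\<forall>u\<in>W. \<forall>v\<in>W. (adj_in E W)\<^sup>*\<^sup>* u v"
  show "connected_on W E" unfolding connected_on_def
  proof (intro ballI)
    fix u v assume "u \<in> W" "v \<in> W"
    then obtain n where "(adj_in E W ^^ n) u v" using reach rtranclp_imp_relpowp by metis
    then show "\<exists>p. walk_in W E p \<and> hd p = u \<and> last p = v"
      using \<open>u \<in> W\<close> by (metis relpowp_imp_walk_in)
  qed
qed

lemma rtranclp_adj_in_mono: "W \<subseteq> W' \<Longrightarrow> (adj_in E W)\<^sup>*\<^sup>* u v \<Longrightarrow> (adj_in E W')\<^sup>*\<^sup>* u v"
  by (rule rtranclp_mono[THEN predicate2D]) (auto simp: adj_in_def)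

lemma rtranclp_adj_in_mem: "(adj_in E W)\<^sup>*\<^sup>* u v \<Longrightarrow> u \<noteq> v \<Longrightarrow> v \<in> W"
  by (induction rule: rtranclp_induct) (auto simp: adj_in_def)

lemma rtranclp_adj_in_sym: "symp E \<Longrightarrow> (adj_in E W)\<^sup>*\<^sup>* u v \<Longrightarrow> (adj_in E W)\<^sup>*\<^sup>* v u"
  by (metis (no_types, lifting) adj_in_def symp_def symp_rtranclp)

lemma connected_on_Un:
  assumes "connected_on A E" "connected_on B E" "A \<inter> B \<noteq> {}"
  shows "connected_on (A \<union> B) E"
proof -
  obtain w where w: "w \<in> A" "w \<in> B" using assms(3) by blast
  have "(adj_in E (A \<union> B))\<^sup>*\<^sup>* u v" if "u \<in> C" "v \<in> C" "connected_on C E" "C \<subseteq> A \<union> B"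
    for u v C
    using that by (meson connected_on_iff_rtranclp rtranclp_adj_in_mono)
  then show ?thesis
    using assms w unfolding connected_on_iff_rtranclp[of "A \<union> B"]
    by (metis Un_iff rtranclp_trans sup.cobounded1 sup.cobounded2)
qed

lemma connected_on_walk_in:
  assumes "symp E" "walk_in W E p"
  shows "connected_on (set p) E"
proof -
  have p: "walk_in (set p) E p" using assms(2) by (simp add: walk_in_mono)
  show ?thesis unfolding connected_on_iff_rtranclp
    by (meson assms(1) p rtranclp_adj_in_sym rtranclp_trans walk_in_rtranclp)
qed

section \<open>Distances in a connected graph\<close>

locale conn_graph =
  fixes V :: "'a set" and E :: "'a \<Rightarrow> 'a \<Rightarrow> bool"
  assumes connected: "connected_graph V E"
begin

lemma finite_V: "finite V"
  using connected unfolding connected_graph_def simple_graph_def by simp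

lemma V_ne: "V \<noteq> {}"
  using connected unfolding connected_graph_def by simp

lemma edge_sym: "E u v \<Longrightarrow> E v u"
  using connected unfolding connected_graph_def simple_graph_def by blast

lemma symp_E: "symp E"
  using edge_sym by (blast intro: sympI)

lemma edge_in_V: "E u v \<Longrightarrow> u \<in> V \<and> v \<in> V"
  using connected unfolding connected_graph_def simple_graph_def by blast

lemma edge_ne: "E u v \<Longrightarrow> u \<noteq> v"
  using connected unfolding connected_graph_def simple_graph_def by blast

lemma adj_in_V: "E u v \<Longrightarrow> adj_in E V u v"
  by (simp add: adj_in_def edge_in_V)

lemma rtranclp_adj_in_V: "u \<in> V \<Longrightarrow> v \<in> V \<Longrightarrow> (adj_in E V)\<^sup>*\<^sup>* u v"
  using connected unfolding connected_graph_def connected_on_iff_rtranclp by blast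

definition dist :: "'a \<Rightarrow> 'a \<Rightarrow> nat" where
  "dist u v = (LEAST n. (adj_in E V ^^ n) u v)"

lemma dist_relpowp: "u \<in> V \<Longrightarrow> v \<in> V \<Longrightarrow> (adj_in E V ^^ dist u v) u v"
  unfolding dist_def by (metis LeastI rtranclp_adj_in_V rtranclp_imp_relpowp)

lemma dist_le: "(adj_in E V ^^ n) u v \<Longrightarrow> dist u v \<le> n"
  unfolding dist_def by (rule Least_le)

lemma relpowp_adj_in_sym:
  assumes "(adj_in E W ^^ n) u v" "u \<in> W"
  shows "(adj_in E W ^^ n) v u"
proof -
  obtain p where p: "walk_in W E p" "hd p = u" "last p = v" "length p = Suc n"
    using assms by (rule relpowp_imp_walk_in)
  then have "walk_in W E (rev p)" by (simp add: walk_in_rev symp_E)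
  moreover have "p \<noteq> []" using p(4) by auto
  ultimately show ?thesis
    using walk_in_relpowp[of W E "rev p" 0 n] p by (simp add: rev_nth hd_conv_nth last_conv_nth)
qed

lemma dist_sym: "u \<in> V \<Longrightarrow> v \<in> V \<Longrightarrow> dist u v = dist v u"
  by (meson antisym dist_le dist_relpowp relpowp_adj_in_sym)

lemma dist_triangle: "u \<in> V \<Longrightarrow> v \<in> V \<Longrightarrow> w \<in> V \<Longrightarrow> dist u w \<le> dist u v + dist v w"
  by (meson dist_le dist_relpowp relpowp_trans)

lemma dist_self: "dist u u = 0"
  using dist_le[of 0 u u] by simp

lemma dist_eq_0_iff: "u \<in> V \<Longrightarrow> v \<in> V \<Longrightarrow> dist u v = 0 \<longleftrightarrow> u = v"
  using dist_relpowp dist_self by fastforce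

lemma dist_edge: "E u v \<Longrightarrow> dist u v = 1"
  using dist_le[of 1 u v] dist_eq_0_iff[of u v] adj_in_V edge_in_V edge_ne by fastforce

lemma dist_edge_le: "s \<in> V \<Longrightarrow> E u v \<Longrightarrow> dist s v \<le> dist s u + 1"
  using dist_triangle[of s u v] dist_edge edge_in_V by fastforce

lemma dist_Suc_pred:
  assumes "s \<in> V" "c \<in> V" "dist s c = Suc m"
  obtains b where "E b c" "dist s b = m"
proof -
  obtain b where b: "(adj_in E V ^^ m) s b" "adj_in E V b c"
    using dist_relpowp[OF assms(1,2)] assms(3) by (metis relpowp_Suc_E)
  then have "dist s b = m"
    using dist_le[OF b(1)] dist_edge_le[OF assms(1), of b c] assms(3) by (simp add: adj_in_def)
  with b(2) show ?thesis using that by (auto simp: adj_in_def)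
qed

lemma nearest_exists:
  assumes "finite K" "K \<noteq> {}"
  obtains c where "c \<in> K" "\<forall>y\<in>K. dist s c \<le> dist s y"
  using arg_min_if_finite[OF assms, of "dist s"] that by (metis not_less)

text \<open>A vertex at least as far from \<open>s\<close> as \<open>y\<close> cannot lie on a shortest \<open>s\<close>--\<open>y\<close> path.\<close>

lemma rtranclp_avoiding_farther:
  assumes "s \<in> V" "y \<in> V" "c \<noteq> y" "dist s y \<le> dist s c"
  shows "(adj_in E (V - {c}))\<^sup>*\<^sup>* s y"
  using assms(2-4)
proof (induction "dist s y" arbitrary: y)
  case 0
  then show ?case using assms(1) dist_eq_0_iff by fastforce
next
  case (Suc m)
  obtain b where b: "E b y" "dist s b = m"
    using dist_Suc_pred[OF assms(1) Suc.prems(1) Suc.hyps(2)[symmetric]] .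
  have "b \<in> V" "b \<noteq> c" using b Suc edge_in_V by auto
  then have "(adj_in E (V - {c}))\<^sup>*\<^sup>* s b" using Suc b by simp
  moreover have "adj_in E (V - {c}) b y"
    using b(1) Suc.prems \<open>b \<noteq> c\<close> edge_in_V by (simp add: adj_in_def)
  ultimately show ?case by simp
qed

lemma walk_in_dist_less_length: "walk_in V E q \<Longrightarrow> dist (hd q) (last q) < length q"
proof -
  assume q: "walk_in V E q"
  then have "q \<noteq> []" by (simp add: walk_in_def)
  then have "dist (hd q) (last q) \<le> length q - 1" "0 < length q"
    using dist_le[OF walk_in_relpowp[OF q, of 0 "length q - 1"]]
    by (simp_all add: hd_conv_nth last_conv_nth)
  then show ?thesis by linarith
qed

lemma shortest_path_exists:
  assumes "u \<in> V" "v \<in> V"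
  obtains q where "shortest_path V E q" "hd q = u" "last q = v"
proof -
  obtain q where q: "walk_in V E q" "hd q = u" "last q = v" "length q = Suc (dist u v)"
    using dist_relpowp[OF assms] assms(1) by (rule relpowp_imp_walk_in)
  have "length q \<le> length p" if "walk_in V E p" "hd p = hd q" "last p = last q" for p
    using walk_in_dist_less_length[OF that(1)] q that(2,3) by simp
  then have "shortest_path V E q" unfolding shortest_path_def using q(1) by blast
  then show ?thesis using that q by blast
qed

lemma shortest_path_length:
  assumes "shortest_path V E q"
  shows "length q = Suc (dist (hd q) (last q))"
proof -
  have q: "walk_in V E q" using assms by (simp add: shortest_path_def)
  then have "hd q \<in> V" "last q \<in> V" by (auto simp: walk_in_def)
  then obtain p where "walk_in V E p" "hd p = hd q" "last p = last q"
      "length p = Suc (dist (hd q) (last q))"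
    using dist_relpowp by (blast elim: relpowp_imp_walk_in)
  then have "length q \<le> Suc (dist (hd q) (last q))"
    using assms unfolding shortest_path_def by auto
  with walk_in_dist_less_length[OF q] show ?thesis by simp
qed

lemma shortest_path_dist_nth:
  assumes q: "shortest_path V E q" and "i \<le> l" "l < length q"
  shows "dist (q ! i) (q ! l) = l - i"
proof -
  have w: "walk_in V E q" using q by (simp add: shortest_path_def)
  then have ne: "q \<noteq> []" by (simp add: walk_in_def)
  have seg: "dist (q ! j) (q ! k) \<le> k - j" if "j \<le> k" "k < length q" for j k
    using dist_le walk_in_relpowp[OF w that] by blast
  have inV: "q ! j \<in> V" if "j < length q" for j
    using w nth_mem[OF that] unfolding walk_in_def by blast
  let ?n = "length q - 1"
  have "?n = dist (q ! 0) (q ! ?n)"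
    using shortest_path_length[OF q] ne by (simp add: hd_conv_nth last_conv_nth)
  moreover have "dist (q ! 0) (q ! ?n) \<le> dist (q ! 0) (q ! i) + dist (q ! i) (q ! ?n)"
    "dist (q ! i) (q ! ?n) \<le> dist (q ! i) (q ! l) + dist (q ! l) (q ! ?n)"
    using assms(2,3) ne by (simp_all add: dist_triangle inV)
  moreover have "dist (q ! 0) (q ! i) \<le> i" "dist (q ! l) (q ! ?n) \<le> ?n - l"
    using seg[of 0 i] seg[of l ?n] assms(2,3) by simp_all
  ultimately show ?thesis using seg[of i l] assms(2,3) by linarith
qed

text \<open>On a shortest path, the distance between two vertices is the difference of their
  positions; hence of three vertices of a shortest path, one lies between the other two.\<close>

lemma gp_setI_dist:
  assumes "S \<subseteq> V"
    and not_between: "\<And>u v w. u \<in> S \<Longrightarrow> v \<in> S \<Longrightarrow> w \<in> S \<Longrightarrow> u \<noteq> v \<Longrightarrow> v \<noteq> w \<Longrightarrow> u \<noteq> w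
      \<Longrightarrow> dist u w \<noteq> dist u v + dist v w"
  shows "gp_set V E S"
  unfolding gp_set_def
proof (intro conjI notI)
  assume "\<exists>x\<in>S. \<exists>y\<in>S. \<exists>z\<in>S. x \<noteq> y \<and> y \<noteq> z \<and> x \<noteq> z \<and>
    (\<exists>p. shortest_path V E p \<and> x \<in> set p \<and> y \<in> set p \<and> z \<in> set p)"
  then obtain x y z q where xyz: "x \<in> S" "y \<in> S" "z \<in> S" "x \<noteq> y" "y \<noteq> z" "x \<noteq> z"
    and q: "shortest_path V E q" "x \<in> set q" "y \<in> set q" "z \<in> set q" by blast
  obtain a b c where a: "a < length q" "x = q ! a" and b: "b < length q" "y = q ! b"
    and c: "c < length q" "z = q ! c"
    using q(2-4) by (metis in_set_conv_nth)
  have inV: "q ! j \<in> V" if "j < length q" for j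
    using q(1) that nth_mem by (fastforce simp: shortest_path_def walk_in_def)
  have d: "dist (q ! i) (q ! j) = (if i \<le> j then j - i else i - j)"
    if "i < length q" "j < length q" for i j
  proof (cases "i \<le> j")
    case True
    then show ?thesis using shortest_path_dist_nth[OF q(1) _ that(2)] by simp
  next
    case False
    then have "dist (q ! j) (q ! i) = i - j" using shortest_path_dist_nth[OF q(1) _ that(1)] by simp
    then show ?thesis using False dist_sym[OF inV inV] that by simp
  qed
  have "dist x z = dist x y + dist y z \<or> dist y z = dist y x + dist x z \<or>
      dist x y = dist x z + dist z y"
    unfolding a(2) b(2) c(2) d[OF a(1) c(1)] d[OF a(1) b(1)] d[OF b(1) c(1)] d[OF b(1) a(1)]
      d[OF c(1) b(1)] by (auto split: if_splits)
  moreover have "dist x z \<noteq> dist x y + dist y z" "dist y z \<noteq> dist y x + dist x z"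
    "dist x y \<noteq> dist x z + dist z y"
    using not_between xyz by simp_all
  ultimately show False by blast
qed (use assms in simp)

lemma gp_set_rtranclp_avoiding:
  assumes gp: "gp_set V E S" and "x \<in> S" "s \<in> S" "t \<in> S" "s \<noteq> x" "t \<noteq> x"
  shows "(adj_in E (V - {x}))\<^sup>*\<^sup>* s t"
proof (cases "s = t")
  case False
  have "s \<in> V" "t \<in> V" using gp assms by (auto simp: gp_set_def)
  then obtain q where q: "shortest_path V E q" "hd q = s" "last q = t"
    by (rule shortest_path_exists)
  then have w: "walk_in V E q" by (simp add: shortest_path_def)
  then have "s \<in> set q" "t \<in> set q" using q by (auto simp: walk_in_def)
  then have "x \<notin> set q" using gp assms False q(1) unfolding gp_set_def by blast
  then have "walk_in (V - {x}) E q" using w by (auto simp: walk_in_def)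
  then show ?thesis using walk_in_rtranclp \<open>t \<in> set q\<close> q(2) by fastforce
qed simp

text \<open>Removing a vertex \<open>y\<close> from the cycle \<open>x p\<close> leaves two paths from \<open>x\<close>: along \<open>p\<close> up
  to \<open>y\<close>, and backwards along \<open>p\<close> down to \<open>y\<close>.\<close>

lemma cycle_minus_vertex_connected:
  assumes p: "walk_in (V - {x}) E p" "distinct p" and x: "E x (hd p)" "E x (last p)"
    and "y \<in> set p"
  shows "connected_on (insert x (set p) - {y}) E"
proof -
  have ne: "p \<noteq> []" and xp: "x \<notin> set p" using p(1) by (auto simp: walk_in_def)
  obtain j where j: "j < length p" "p ! j = y" using \<open>y \<in> set p\<close> by (auto simp: in_set_conv_nth)
  let ?pre = "take j p" and ?suf = "drop (Suc j) p"
  have split: "p = ?pre @ y # ?suf" using j id_take_nth_drop by metis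
  then have "distinct (?pre @ y # ?suf)" using p(2) by metis
  then have y: "y \<notin> set ?pre" "y \<notin> set ?suf" "x \<noteq> y" using xp \<open>y \<in> set p\<close> by auto
  have "set p = insert y (set ?pre \<union> set ?suf)" using arg_cong[OF split, of set] by simp
  then have rest: "insert x (set p) - {y} = set (x # ?pre) \<union> set (x # rev ?suf)" using y by auto
  have "walk_in (insert x (set p) - {y}) E (x # ?pre)"
  proof (cases "j = 0")
    case False
    then have "walk_in (V - {x}) E ?pre" "hd ?pre = hd p" using p(1) ne by (auto intro: walk_in_take)
    then show ?thesis using x(1) y rest by (auto simp: walk_in_Cons intro: walk_in_mono)
  qed (use y rest in \<open>simp add: walk_in_Cons\<close>)
  moreover have "walk_in (insert x (set p) - {y}) E (x # rev ?suf)"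
  proof (cases "?suf = []")
    case False
    then have "walk_in (V - {x}) E (rev ?suf)" "hd (rev ?suf) = last p"
      using p(1) by (auto simp: walk_in_rev symp_E hd_rev intro: walk_in_drop)
    then show ?thesis using x(2) y rest False by (auto simp: walk_in_Cons intro: walk_in_mono)
  qed (use y rest in \<open>simp add: walk_in_Cons\<close>)
  ultimately have "connected_on (set (x # ?pre)) E" "connected_on (set (x # rev ?suf)) E"
    using connected_on_walk_in[OF symp_E] by blast+
  then show ?thesis unfolding rest by (intro connected_on_Un) auto
qed

lemma nonseparable_cycle:
  assumes p: "walk_in (V - {x}) E p" "distinct p" and x: "E x (hd p)" "E x (last p)"
  shows "nonseparable V E (insert x (set p))"
proof -
  let ?B = "insert x (set p)"
  have ne: "p \<noteq> []" and xp: "x \<notin> set p" and pV: "set p \<subseteq> V"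
    using p(1) by (auto simp: walk_in_def)
  have xV: "x \<in> V" using x edge_in_V by blast
  have "walk_in ?B E (x # p)" using p(1) x(1) by (auto simp: walk_in_Cons intro: walk_in_mono)
  then have "connected_on ?B E" using connected_on_walk_in[OF symp_E] by fastforce
  moreover have "connected_on (?B - {y}) E" if "y \<in> ?B" for y
  proof (cases "y = x")
    case True
    then show ?thesis using connected_on_walk_in[OF symp_E p(1)] xp by simp
  qed (use that cycle_minus_vertex_connected[OF p x] in simp)
  moreover have "2 \<le> card ?B"
    using ne xp by (simp add: Suc_le_eq card_gt_0_iff)
  ultimately show ?thesis unfolding nonseparable_def using pV xV by auto
qed

end

section \<open>Cliques and robot moves\<close>

definition maximal_clique :: "'a set \<Rightarrow> ('a \<Rightarrow> 'a \<Rightarrow> bool) \<Rightarrow> 'a set \<Rightarrow> bool" where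
  "maximal_clique V E K \<longleftrightarrow> is_clique V E K \<and> (\<forall>K'. is_clique V E K' \<and> K \<subseteq> K' \<longrightarrow> K' = K)"

text \<open>Unlike \<open>legal_move\<close>, which only requires the new position to be in general position,
  this relation is symmetric.\<close>

definition gp_move :: "'a set \<Rightarrow> ('a \<Rightarrow> 'a \<Rightarrow> bool) \<Rightarrow> 'a set \<Rightarrow> 'a set \<Rightarrow> bool" where
  "gp_move V E S S' \<longleftrightarrow> gp_set V E S \<and> legal_move V E S S'"

lemma legal_move_card: "legal_move V E S S' \<Longrightarrow> finite S \<Longrightarrow> card S' = card S"
proof -
  assume "legal_move V E S S'" "finite S"
  then obtain u v where "u \<in> S" "v \<notin> S" "S' = insert v (S - {u})"
    unfolding legal_move_def by blast
  with \<open>finite S\<close> show ?thesis using card_Suc_Diff1[of S u] by simp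
qed

context conn_graph
begin

lemma is_clique_insertI:
  assumes K: "is_clique V E K" and "w \<in> V" and w: "\<forall>z\<in>K. z \<noteq> w \<longrightarrow> E w z"
  shows "is_clique V E (insert w K)"
  unfolding is_clique_def
proof (intro conjI ballI impI)
  show "insert w K \<subseteq> V" using K \<open>w \<in> V\<close> by (simp add: is_clique_def)
  fix u v assume uv: "u \<in> insert w K" "v \<in> insert w K" "u \<noteq> v"
  consider "u = w" "v \<in> K" | "v = w" "u \<in> K" | "u \<in> K" "v \<in> K" using uv by blast
  then show "E u v"
  proof cases
    case 2
    then show ?thesis using w uv(3) by (blast intro: edge_sym)
  qed (use uv w K in \<open>auto simp: is_clique_def\<close>)
qed

lemma maximal_clique_exists:
  assumes "is_clique V E N"
  obtains K where "maximal_clique V E K" "N \<subseteq> K"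
proof -
  let ?M = "{K. is_clique V E K \<and> N \<subseteq> K}"
  have "?M \<subseteq> Pow V" by (auto simp: is_clique_def)
  then have "finite ?M" using finite_V by (simp add: finite_subset)
  moreover have "?M \<noteq> {}" using assms by blast
  ultimately obtain K where K: "K \<in> ?M" and max: "\<forall>K'\<in>?M. K \<subseteq> K' \<longrightarrow> K = K'"
    by (rule finite_has_maximal[THEN bexE])
  have "maximal_clique V E K"
    unfolding maximal_clique_def
  proof (intro conjI allI impI)
    show "is_clique V E K" using K by simp
    fix K' assume "is_clique V E K' \<and> K \<subseteq> K'"
    then show "K' = K" using K max by auto
  qed
  with K show ?thesis using that by blast
qed

lemma maximal_clique_ne:
  assumes "maximal_clique V E K" shows "K \<noteq> {}"
proof
  assume "K = {}"
  obtain v where "v \<in> V" using V_ne by blast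
  then have "is_clique V E {v}" by (simp add: is_clique_def)
  then show False using assms \<open>K = {}\<close> unfolding maximal_clique_def by blast
qed

lemma maximal_clique_nonadjacent:
  assumes K: "maximal_clique V E K" and "a \<in> V" "a \<notin> K"
  obtains y where "y \<in> K" "y \<noteq> a" "\<not> E a y"
proof (rule ccontr)
  assume "\<not> thesis"
  with that have "\<forall>z\<in>K. z \<noteq> a \<longrightarrow> E a z" by blast
  then have "is_clique V E (insert a K)"
    using K \<open>a \<in> V\<close> by (intro is_clique_insertI) (simp_all add: maximal_clique_def)
  then show False using K \<open>a \<notin> K\<close> unfolding maximal_clique_def by blast
qed

lemma finite_clique: "is_clique V E K \<Longrightarrow> finite K"
  using finite_V finite_subset unfolding is_clique_def by auto

lemma gp_set_finite: "gp_set V E S \<Longrightarrow> finite S"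
  using finite_V finite_subset unfolding gp_set_def by auto

lemma symp_gp_move: "symp (gp_move V E)"
proof (rule sympI)
  fix S S' assume "gp_move V E S S'"
  then obtain u v where "gp_set V E S" "u \<in> S" "v \<notin> S" "E u v" "S' = insert v (S - {u})"
      "gp_set V E S'"
    unfolding gp_move_def legal_move_def by blast
  moreover have "v \<in> S'" "u \<notin> S'" "E v u" "S = insert u (S' - {v})"
    using calculation edge_ne[of u v] by (auto intro: edge_sym)
  ultimately show "gp_move V E S' S" unfolding gp_move_def legal_move_def by blast
qed

lemma successively_gp_move:
  "gp_set V E (hd cs) \<Longrightarrow> successively (legal_move V E) cs \<Longrightarrow> successively (gp_move V E) cs"
  by (induction cs rule: induct_list012) (auto simp: gp_move_def legal_move_def)

lemma mobile_gp_set_iff_reachable: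
  "mobile_gp_set V E S \<longleftrightarrow> gp_set V E S \<and> (\<forall>t\<in>V. \<exists>T. (gp_move V E)\<^sup>*\<^sup>* S T \<and> t \<in> T)"
proof
  assume "mobile_gp_set V E S"
  then obtain cs where cs: "gp_set V E S" "cs \<noteq> []" "hd cs = S"
      "successively (legal_move V E) cs" "V \<subseteq> \<Union> (set cs)"
    unfolding mobile_gp_set_def successively_conv_nth by blast
  then have "successively (gp_move V E) cs" by (simp add: successively_gp_move)
  then show "gp_set V E S \<and> (\<forall>t\<in>V. \<exists>T. (gp_move V E)\<^sup>*\<^sup>* S T \<and> t \<in> T)"
    using cs successively_rtranclp by fastforce
next
  assume "gp_set V E S \<and> (\<forall>t\<in>V. \<exists>T. (gp_move V E)\<^sup>*\<^sup>* S T \<and> t \<in> T)"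
  then obtain T where gp: "gp_set V E S" and T: "\<forall>t\<in>V. (gp_move V E)\<^sup>*\<^sup>* S (T t) \<and> t \<in> T t"
    by metis
  obtain cs where cs: "cs \<noteq> []" "hd cs = S" "successively (gp_move V E) cs" "T ` V \<subseteq> set cs"
    using symp_rtranclp_tour[OF symp_gp_move, of "T ` V" S] finite_V T by blast
  then have "successively (legal_move V E) cs"
    by (auto elim: successively_mono simp: gp_move_def)
  moreover have "V \<subseteq> \<Union> (set cs)" using cs(4) T by blast
  ultimately show "mobile_gp_set V E S"
    unfolding mobile_gp_set_def successively_conv_nth[symmetric] using gp cs by blast
qed

lemma maximum_clique_exists:
  obtains K where "is_clique V E K" "card K = clique_number V E"
    "\<forall>K'. is_clique V E K' \<longrightarrow> card K' \<le> card K"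
proof -
  let ?C = "{card K | K. is_clique V E K}"
  have "?C \<subseteq> card ` Pow V" by (auto simp: is_clique_def)
  then have "finite ?C" using finite_V by (simp add: finite_subset)
  moreover have "is_clique V E {}" by (simp add: is_clique_def)
  then have "card {} \<in> ?C" by (intro CollectI exI[of _ "{}"]) simp
  ultimately have "clique_number V E \<in> ?C" "\<forall>k\<in>?C. k \<le> clique_number V E"
    unfolding clique_number_def using Max_in Max_ge by blast+
  then obtain K where K: "is_clique V E K" "card K = clique_number V E" by force
  have "\<forall>K'. is_clique V E K' \<longrightarrow> card K' \<le> card K"
    using K(2) \<open>\<forall>k\<in>?C. k \<le> clique_number V E\<close> by auto
  then show ?thesis using that[OF K] by blast
qed

lemma maximum_clique_is_maximal:
  assumes "is_clique V E K" "\<forall>K'. is_clique V E K' \<longrightarrow> card K' \<le> card K"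
  shows "maximal_clique V E K"
  unfolding maximal_clique_def
proof (intro conjI allI impI)
  fix K' assume K': "is_clique V E K' \<and> K \<subseteq> K'"
  then have "card K \<le> card K'" using finite_clique card_mono by blast
  then have "card K = card K'" using assms(2) K' by (simp add: le_antisym)
  then show "K' = K" using card_subset_eq[OF finite_clique] K' by blast
qed (rule assms(1))

end

section \<open>In a block graph every maximal clique is mobile\<close>

locale blk_graph = conn_graph +
  assumes block_is_clique: "is_block V E B \<Longrightarrow> is_clique V E B"
begin

lemma nonseparable_is_clique:
  assumes "nonseparable V E B"
  shows "is_clique V E B"
proof -
  let ?M = "{B'. nonseparable V E B' \<and> B \<subseteq> B'}"
  have "?M \<subseteq> Pow V" by (auto simp: nonseparable_def)
  then have "finite ?M" using finite_V by (simp add: finite_subset)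
  moreover have "?M \<noteq> {}" using assms by blast
  ultimately obtain B' where B': "B' \<in> ?M" and max: "\<forall>B''\<in>?M. B' \<subseteq> B'' \<longrightarrow> B' = B''"
    by (rule finite_has_maximal[THEN bexE])
  have "is_block V E B'"
    unfolding is_block_def
  proof (intro conjI allI impI)
    show "nonseparable V E B'" using B' by simp
    fix B'' assume "nonseparable V E B'' \<and> B' \<subseteq> B''"
    then show "B'' = B'" using B' max by auto
  qed
  then have "is_clique V E B'" by (rule block_is_clique)
  then show ?thesis using B' assms unfolding is_clique_def nonseparable_def by blast
qed

text \<open>In a block graph every cycle spans a clique, so two non-adjacent neighbours of \<open>x\<close>
  can only be joined through \<open>x\<close>.\<close>

lemma common_neighbour_separates:
  assumes "E x a" "E x b" "a \<noteq> b" "\<not> E a b"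
  shows "\<not> (adj_in E (V - {x}))\<^sup>*\<^sup>* a b"
proof
  assume "(adj_in E (V - {x}))\<^sup>*\<^sup>* a b"
  moreover have "a \<in> V - {x}" using assms(1) edge_in_V edge_ne by blast
  ultimately obtain p where p: "walk_in (V - {x}) E p" "distinct p" "hd p = a" "last p = b"
    by (rule rtranclp_imp_distinct_walk_in)
  then have "is_clique V E (insert x (set p))"
    using assms(1,2) by (intro nonseparable_is_clique nonseparable_cycle) simp_all
  moreover have "a \<in> set p" "b \<in> set p" using p by (auto simp: walk_in_def)
  ultimately show False using assms(3,4) unfolding is_clique_def by blast
qed

lemma common_predecessor:
  assumes "s \<in> V" "E y c" "dist s y = Suc m" "dist s c = Suc m"
  obtains w where "E w y" "E w c" "dist s w = m"
proof -
  have yV: "y \<in> V" and cV: "c \<in> V" using assms(2) edge_in_V by blast+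
  obtain c' where c': "E c' c" "dist s c' = m" using dist_Suc_pred[OF assms(1) cV assms(4)] .
  obtain y' where y': "E y' y" "dist s y' = m" using dist_Suc_pred[OF assms(1) yV assms(3)] .
  have c'V: "c' \<in> V" and y'V: "y' \<in> V" using c'(1) y'(1) edge_in_V by blast+
  have "E c' y"
  proof (rule ccontr)
    assume "\<not> E c' y"
    moreover have "c' \<noteq> y" using c'(2) assms(3) by auto
    ultimately have "\<not> (adj_in E (V - {c}))\<^sup>*\<^sup>* c' y"
      using common_neighbour_separates c'(1) assms(2) edge_sym by blast
    moreover have "(adj_in E (V - {c}))\<^sup>*\<^sup>* s c'" "(adj_in E (V - {c}))\<^sup>*\<^sup>* s y'"
      using c' y' assms(4) edge_ne[of c' c] edge_ne[of y' c]
      by (auto intro!: rtranclp_avoiding_farther assms(1) c'V y'V)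
    moreover have "adj_in E (V - {c}) y' y"
      using y' assms edge_ne[of y c] yV y'V by (auto simp: adj_in_def)
    ultimately show False
      by (meson rtranclp.rtrancl_into_rtrancl rtranclp_adj_in_sym rtranclp_trans symp_E)
  qed
  then show ?thesis using that c' edge_sym by blast
qed

lemma maximal_clique_dist_Suc_nearest:
  assumes K: "maximal_clique V E K" and "p \<in> V" "c \<in> K"
    and nearest: "\<forall>y\<in>K. dist p c \<le> dist p y" and "y \<in> K" "y \<noteq> c"
  shows "dist p y = Suc (dist p c)"
proof (rule ccontr)
  assume "dist p y \<noteq> Suc (dist p c)"
  have Kc: "is_clique V E K" using K by (simp add: maximal_clique_def)
  have Eyc: "E y c" using Kc assms(5,6,3) by (simp add: is_clique_def)
  have "dist p y \<le> dist p c + 1" using dist_edge_le[OF assms(2) edge_sym[OF Eyc]] .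
  then have eq: "dist p y = dist p c"
    using nearest assms(5) \<open>dist p y \<noteq> Suc (dist p c)\<close> by fastforce
  show False
  proof (cases "dist p c")
    case 0
    then have "p = c" "p = y"
      using eq dist_eq_0_iff[OF assms(2)] edge_in_V[OF Eyc] by (metis, metis)
    then show False using assms(6) by simp
  next
    case (Suc m)
    obtain w where w: "E w y" "E w c" "dist p w = m"
      using common_predecessor[OF assms(2) Eyc] eq Suc by metis
    have "w \<notin> K" using nearest w(3) Suc by fastforce
    have wV: "w \<in> V" using w(1) edge_in_V by blast
    have "E w z" if "z \<in> K" "z \<noteq> w" for z
    proof (rule ccontr)
      assume "\<not> E w z"
      then have zc: "z \<noteq> c" "z \<noteq> y" using w by auto
      have "\<not> (adj_in E (V - {c}))\<^sup>*\<^sup>* w z"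
        using common_neighbour_separates[of c w z] w(2) Kc that zc \<open>\<not> E w z\<close> assms(3)
        by (auto simp: is_clique_def intro: edge_sym)
      moreover have "adj_in E (V - {c}) w y" "adj_in E (V - {c}) y z"
        using w Kc that zc assms(5,6) edge_ne[of w c] wV
        by (auto simp: adj_in_def is_clique_def)
      ultimately show False by (meson r_into_rtranclp rtranclp.rtrancl_into_rtrancl)
    qed
    then have "is_clique V E (insert w K)" using Kc wV by (intro is_clique_insertI) auto
    then show False using K \<open>w \<notin> K\<close> unfolding maximal_clique_def by blast
  qed
qed

lemma gp_set_swap_nearest:
  assumes K: "maximal_clique V E K" and "p \<in> V" "c \<in> K"
    and nearest: "\<forall>y\<in>K. dist p c \<le> dist p y"
  shows "gp_set V E (insert p (K - {c}))"
proof (rule gp_setI_dist)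
  have Kc: "is_clique V E K" using K by (simp add: maximal_clique_def)
  then show "insert p (K - {c}) \<subseteq> V" using assms(2) by (auto simp: is_clique_def)
  let ?r = "Suc (dist p c)"
  have far: "dist p y = ?r" "dist y p = ?r" if "y \<in> K - {c}" for y
  proof -
    have "y \<in> V" using Kc that by (auto simp: is_clique_def)
    moreover show "dist p y = ?r" using maximal_clique_dist_Suc_nearest[OF assms] that by simp
    ultimately show "dist y p = ?r" using dist_sym[OF assms(2)] by metis
  qed
  have adj: "dist y y' = 1" if "y \<in> K" "y' \<in> K" "y \<noteq> y'" for y y'
    using Kc that dist_edge by (simp add: is_clique_def)
  fix u v w assume uvw: "u \<in> insert p (K - {c})" "v \<in> insert p (K - {c})"
    "w \<in> insert p (K - {c})" "u \<noteq> v" "v \<noteq> w" "u \<noteq> w"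
  consider "u = p" | "v = p" | "w = p" | "u \<in> K - {c}" "v \<in> K - {c}" "w \<in> K - {c}"
    using uvw by blast
  then show "dist u w \<noteq> dist u v + dist v w"
    by cases (use uvw far adj in auto)
qed

lemma gp_move_to_nearest_swap:
  assumes K: "maximal_clique V E K" and "c \<in> K"
  shows "p \<in> V \<Longrightarrow> \<forall>y\<in>K. dist p c \<le> dist p y \<Longrightarrow> (gp_move V E)\<^sup>*\<^sup>* K (insert p (K - {c}))"
proof (induction "dist p c" arbitrary: p)
  have cV: "c \<in> V" using K assms(2) by (auto simp: maximal_clique_def is_clique_def)
  case 0
  then have "p = c" using dist_eq_0_iff cV by metis
  then show ?case using assms(2) by (simp add: insert_absorb)
next
  have KV: "K \<subseteq> V" using K by (simp add: maximal_clique_def is_clique_def)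
  have cV: "c \<in> V" using KV assms(2) by blast
  case (Suc m p)
  obtain b where b: "E b p" "dist c b = m"
    using dist_Suc_pred[OF cV Suc.prems(1)] dist_sym[OF Suc.prems(1) cV] Suc.hyps(2) by metis
  have bV: "b \<in> V" using b(1) edge_in_V by blast
  have dbc: "dist b c = m" using b(2) dist_sym[OF bV cV] by simp
  have nearest_b: "\<forall>y\<in>K. dist b c \<le> dist b y"
  proof
    fix y assume "y \<in> K"
    then have "dist p y \<le> dist p b + dist b y" "dist p c \<le> dist p y"
      using dist_triangle[OF Suc.prems(1) bV] KV Suc.prems(2) by auto
    then show "dist b c \<le> dist b y"
      using dist_edge[OF edge_sym[OF b(1)]] dbc Suc.hyps(2) by simp
  qed
  have "p \<notin> K - {c}" "b \<notin> K - {c}"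
    using Suc.prems(2) nearest_b Suc.hyps(2) dbc dist_self dist_eq_0_iff[OF bV cV] by force+
  then have "legal_move V E (insert b (K - {c})) (insert p (K - {c}))"
    unfolding legal_move_def using b(1) edge_ne[OF b(1)]
      gp_set_swap_nearest[OF K Suc.prems(1) assms(2) Suc.prems(2)]
    by (intro exI[of _ b] exI[of _ p]) auto
  then have "gp_move V E (insert b (K - {c})) (insert p (K - {c}))"
    unfolding gp_move_def using gp_set_swap_nearest[OF K bV assms(2) nearest_b] by blast
  moreover have "(gp_move V E)\<^sup>*\<^sup>* K (insert b (K - {c}))"
    using Suc.hyps(1)[OF dbc[symmetric] bV nearest_b] .
  ultimately show ?case by simp
qed

theorem maximal_clique_mobile:
  assumes K: "maximal_clique V E K"
  shows "mobile_gp_set V E K"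
  unfolding mobile_gp_set_iff_reachable
proof
  have fin: "finite K" and ne: "K \<noteq> {}"
    using K finite_clique maximal_clique_ne by (auto simp: maximal_clique_def)
  have nearest: "\<exists>c\<in>K. \<forall>y\<in>K. dist t c \<le> dist t y" for t
    using nearest_exists[OF fin ne] by metis
  obtain c where "c \<in> K" using ne by blast
  then show "gp_set V E K"
    using gp_set_swap_nearest[OF K _ \<open>c \<in> K\<close>] K dist_self
    by (metis insert_Diff maximal_clique_def is_clique_def subsetD zero_le)
  show "\<forall>t\<in>V. \<exists>T. (gp_move V E)\<^sup>*\<^sup>* K T \<and> t \<in> T"
    using nearest gp_move_to_nearest_swap[OF K] by blast
qed

end

section \<open>No mobile set is larger than a clique\<close>

context conn_graph
begin

definition component_avoiding :: "'a \<Rightarrow> 'a \<Rightarrow> 'a set" where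
  "component_avoiding x z = {w. (adj_in E (V - {x}))\<^sup>*\<^sup>* z w}"

lemma component_avoiding_not_self: "z \<noteq> x \<Longrightarrow> x \<notin> component_avoiding x z"
  unfolding component_avoiding_def using rtranclp_adj_in_mem by fastforce

lemma component_avoiding_closed:
  "w \<in> component_avoiding x z \<Longrightarrow> (adj_in E (V - {x}))\<^sup>*\<^sup>* w w' \<Longrightarrow> w' \<in> component_avoiding x z"
  unfolding component_avoiding_def by simp

lemma component_avoiding_connected:
  "w \<in> component_avoiding x z \<Longrightarrow> w' \<in> component_avoiding x z \<Longrightarrow> (adj_in E (V - {x}))\<^sup>*\<^sup>* w w'"
  unfolding component_avoiding_def mem_Collect_eq
  by (meson rtranclp_adj_in_sym rtranclp_trans symp_E)

lemma clique_off_component: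
  assumes "is_clique V E K" "c \<in> K" "\<not> K - {c} \<subseteq> component_avoiding c z"
  shows "(K - {c}) \<inter> component_avoiding c z = {}"
proof (rule ccontr)
  assume "(K - {c}) \<inter> component_avoiding c z \<noteq> {}"
  then obtain y where y: "y \<in> K - {c}" "y \<in> component_avoiding c z" by blast
  have "y' \<in> component_avoiding c z" if "y' \<in> K - {c}" for y'
  proof (cases "y' = y")
    case False
    then have "adj_in E (V - {c}) y y'" using assms(1) y that by (auto simp: is_clique_def adj_in_def)
    then show ?thesis using component_avoiding_closed[OF y(2)] by blast
  qed (use y in simp)
  then show False using assms(3) by blast
qed

text \<open>With at least three robots, ``all robots but at most one lie in the component \<open>C\<close> of
  \<open>G - x\<close>'' survives every move: a robot entering \<open>x\<close> sees the other robots in a single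
  component of \<open>G - x\<close>, and one of them (there are at least two) lies in \<open>C\<close>.\<close>

lemma gp_move_one_outside:
  assumes "gp_move V E S S'" "3 \<le> card S" "z \<noteq> x" "S - component_avoiding x z \<subseteq> {a}"
  obtains a' where "S' - component_avoiding x z \<subseteq> {a'}"
proof -
  let ?C = "component_avoiding x z"
  obtain u v where uv: "gp_set V E S" "u \<in> S" "v \<notin> S" "E u v" "S' = insert v (S - {u})"
    "gp_set V E S'"
    using assms(1) unfolding gp_move_def legal_move_def by blast
  consider "v = x" | "u = x" | "u \<noteq> x" "v \<noteq> x" by blast
  then show ?thesis
  proof cases
    case 1
    have "finite S" using uv(1) by (rule gp_set_finite)
    have "card S - card {u, a} \<le> card (S - {u, a})" by (rule diff_card_le_card_Diff) simp
    moreover have "card {u, a} \<le> 2" by (simp add: card_insert_if)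
    ultimately have "card (S - {u, a}) \<noteq> 0" using assms(2) by linarith
    then have "S - {u, a} \<noteq> {}" by (metis card.empty)
    then obtain s0 where s0: "s0 \<in> S" "s0 \<noteq> u" "s0 \<noteq> a" by blast
    then have "s0 \<in> ?C" using assms(4) by blast
    have "s \<in> ?C" if "s \<in> S - {u}" for s
    proof -
      have "(adj_in E (V - {x}))\<^sup>*\<^sup>* s0 s"
        using gp_set_rtranclp_avoiding[OF uv(6), of x s0 s] s0 that uv 1 by auto
      then show ?thesis using component_avoiding_closed \<open>s0 \<in> ?C\<close> by blast
    qed
    then show ?thesis using that[of x] uv(5) 1 by blast
  next
    case 2
    then have "S - ?C \<subseteq> {x}"
      using assms(4) uv(2) component_avoiding_not_self[OF assms(3)] by blast
    then show ?thesis using that[of v] uv(5) 2 by blast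
  next
    case 3
    then have "adj_in E (V - {x}) u v" "adj_in E (V - {x}) v u"
      using uv(4) edge_in_V edge_sym by (auto simp: adj_in_def)
    then have "u \<in> ?C \<longleftrightarrow> v \<in> ?C" using component_avoiding_closed by blast
    then show ?thesis using that[of a] that[of v] uv(2,5) assms(4) by blast
  qed
qed

lemma gp_move_rtranclp_invariants:
  "(gp_move V E)\<^sup>*\<^sup>* S T \<Longrightarrow> gp_set V E S \<Longrightarrow> gp_set V E T \<and> card T = card S"
proof (induction rule: rtranclp_induct)
  case (step R R')
  then have "legal_move V E R R'" "gp_set V E R" "card R = card S" by (simp_all add: gp_move_def)
  then show ?case using legal_move_card[OF _ gp_set_finite] unfolding legal_move_def by metis
qed simp

lemma mobile_one_outside:
  assumes "mobile_gp_set V E S" "3 \<le> card S" "x \<in> V"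
  obtains z where "z \<noteq> x" "\<exists>a. S - component_avoiding x z \<subseteq> {a}"
proof -
  obtain T where gp: "gp_set V E S" and ST: "(gp_move V E)\<^sup>*\<^sup>* S T" and "x \<in> T"
    using assms(1,3) unfolding mobile_gp_set_iff_reachable by blast
  then have T: "gp_set V E T" "card T = card S" using gp_move_rtranclp_invariants by blast+
  then have "card (T - {x}) \<noteq> 0" using assms(2) \<open>x \<in> T\<close> gp_set_finite by simp
  then have "T - {x} \<noteq> {}" by (metis card.empty)
  then obtain z where z: "z \<in> T" "z \<noteq> x" by blast
  have "T - component_avoiding x z \<subseteq> {x}"
    using gp_set_rtranclp_avoiding[OF T(1) \<open>x \<in> T\<close> z(1)] z(2)
    by (auto simp: component_avoiding_def)
  moreover have TS: "(gp_move V E)\<^sup>*\<^sup>* T S"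
    using ST symp_gp_move by (metis sympD symp_rtranclp)
  have "(gp_move V E)\<^sup>*\<^sup>* T R \<Longrightarrow> \<exists>a. T - component_avoiding x z \<subseteq> {a} \<Longrightarrow>
      \<exists>a. R - component_avoiding x z \<subseteq> {a}" for R
  proof (induction rule: rtranclp_induct)
    case (step R R')
    have "gp_set V E R" "card R = card S" using gp_move_rtranclp_invariants[OF step(1) T(1)] T by auto
    then show ?case using step gp_move_one_outside[OF step(2) _ z(2)] assms(2) by metis
  qed
  ultimately show ?thesis using that z(2) TS by blast
qed

definition dist_to :: "'a \<Rightarrow> 'a set \<Rightarrow> nat" where
  "dist_to s K = Min (dist s ` K)"

lemma dist_to_le: "finite K \<Longrightarrow> y \<in> K \<Longrightarrow> dist_to s K \<le> dist s y"
  unfolding dist_to_def by simp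

lemma dist_to_attained: "finite K \<Longrightarrow> K \<noteq> {} \<Longrightarrow> \<exists>y\<in>K. dist s y = dist_to s K"
  unfolding dist_to_def by (metis (mono_tags, lifting) Min_in finite_imageI image_iff image_is_empty)

lemma dist_to_le_Suc:
  assumes "is_clique V E K" "c \<in> K" "c \<in> K'" "finite K'" "s \<in> V"
  shows "dist_to s K' \<le> Suc (dist_to s K)"
proof -
  obtain y where y: "y \<in> K" "dist s y = dist_to s K"
    using dist_to_attained finite_clique[OF assms(1)] assms(2) by blast
  have "y \<in> V" "c \<in> V" using assms(1,2) y(1) by (auto simp: is_clique_def)
  have "dist y c \<le> 1"
    using assms(1,2) y(1) dist_edge dist_self by (cases "y = c") (auto simp: is_clique_def)
  then have "dist s c \<le> Suc (dist_to s K)"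
    using dist_triangle[OF assms(5) \<open>y \<in> V\<close> \<open>c \<in> V\<close>] y(2) by simp
  then show ?thesis using dist_to_le[OF assms(4,3), of s] by linarith
qed

text \<open>If \<open>c\<close> separates a vertex \<open>s\<close> from the rest of the clique \<open>K\<close>, every shortest path
  from \<open>s\<close> to \<open>K\<close> ends with an edge \<open>b c\<close> whose end \<open>b\<close> lies on the side of \<open>s\<close>.\<close>

lemma dist_to_less_across_cut:
  assumes K: "is_clique V E K" "c \<in> K" and cut: "(K - {c}) \<inter> component_avoiding c z = {}"
    and s: "s \<in> V" "s \<in> component_avoiding c z" and "z \<noteq> c"
    and K': "finite K'" "{b \<in> component_avoiding c z. E b c} \<subseteq> K'"
  shows "dist_to s K' < dist_to s K"
proof -
  let ?C = "component_avoiding c z"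
  have cV: "c \<in> V" using K by (auto simp: is_clique_def)
  have "s \<noteq> c" using s(2) component_avoiding_not_self[OF \<open>z \<noteq> c\<close>] by blast
  have "dist s c < dist s y" if "y \<in> K" "y \<noteq> c" for y
  proof (rule ccontr)
    assume "\<not> dist s c < dist s y"
    then have "(adj_in E (V - {c}))\<^sup>*\<^sup>* s y"
      using K that s(1) by (intro rtranclp_avoiding_farther) (auto simp: is_clique_def)
    then show False using component_avoiding_closed[OF s(2)] cut that by blast
  qed
  moreover obtain y where y: "y \<in> K" "dist s y = dist_to s K"
    using dist_to_attained[OF finite_clique[OF K(1)]] K(2) by blast
  moreover have "dist_to s K \<le> dist s c" using dist_to_le[OF finite_clique[OF K(1)] K(2)] .
  ultimately have "dist_to s K = dist s c" by (metis leD)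
  moreover obtain m where m: "dist s c = Suc m"
    using dist_eq_0_iff[OF s(1) cV] \<open>s \<noteq> c\<close> not0_implies_Suc by blast
  moreover obtain b where b: "E b c" "dist s b = m" using dist_Suc_pred[OF s(1) cV m] .
  then have "(adj_in E (V - {c}))\<^sup>*\<^sup>* s b"
    using m edge_in_V edge_ne s(1) by (intro rtranclp_avoiding_farther) auto
  then have "b \<in> K'" using component_avoiding_closed[OF s(2)] b(1) K'(2) by blast
  ultimately show ?thesis using dist_to_le[OF K'(1), of b s] b(2) by linarith
qed

end

context blk_graph
begin

lemma neighbours_across_cut_clique:
  assumes "c \<in> V"
  shows "is_clique V E (insert c {b \<in> component_avoiding c z. E b c})"
proof (rule is_clique_insertI)
  show "is_clique V E {b \<in> component_avoiding c z. E b c}"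
    unfolding is_clique_def
  proof (intro conjI ballI impI)
    show "{b \<in> component_avoiding c z. E b c} \<subseteq> V" using edge_in_V by blast
    fix b b' assume b: "b \<in> {b \<in> component_avoiding c z. E b c}" "b' \<in> {b \<in> component_avoiding c z. E b c}"
      "b \<noteq> b'"
    show "E b b'"
    proof (rule ccontr)
      assume "\<not> E b b'"
      then have "\<not> (adj_in E (V - {c}))\<^sup>*\<^sup>* b b'"
        using b edge_sym by (intro common_neighbour_separates) auto
      then show False using b component_avoiding_connected by blast
    qed
  qed
qed (use assms edge_sym in auto)

end

locale one_sided = blk_graph +
  fixes S :: "'a set" and H :: "'a \<Rightarrow> 'a set"
  assumes S_subset: "S \<subseteq> V" and three_le_card: "3 \<le> card S"
    and H_component: "x \<in> V \<Longrightarrow> \<exists>z. z \<noteq> x \<and> H x = component_avoiding x z"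
    and H_heavy: "x \<in> V \<Longrightarrow> \<exists>a. S - H x \<subseteq> {a}"
begin

definition total_dist :: "'a set \<Rightarrow> nat" where
  "total_dist K = (\<Sum>s\<in>S. dist_to s K)"

lemma finite_S: "finite S"
  using S_subset finite_V finite_subset by blast

lemma H_not_self: "x \<in> V \<Longrightarrow> x \<notin> H x"
  using H_component component_avoiding_not_self by metis

lemma H_closed: "x \<in> V \<Longrightarrow> w \<in> H x \<Longrightarrow> (adj_in E (V - {x}))\<^sup>*\<^sup>* w w' \<Longrightarrow> w' \<in> H x"
  using H_component component_avoiding_closed by metis

lemma H_connected: "x \<in> V \<Longrightarrow> w \<in> H x \<Longrightarrow> w' \<in> H x \<Longrightarrow> (adj_in E (V - {x}))\<^sup>*\<^sup>* w w'"
  using H_component component_avoiding_connected by metis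

text \<open>The clique through \<open>c\<close> and its neighbours on the heavy side of \<open>c\<close> is closer
  to the at least two robots on that side and farther from at most one robot.\<close>

lemma total_dist_decreases:
  assumes K: "is_clique V E K" "c \<in> K" and cut: "(K - {c}) \<inter> H c = {}"
    and K': "is_clique V E K'" "insert c {b \<in> H c. E b c} \<subseteq> K'"
  shows "total_dist K' < total_dist K"
  unfolding total_dist_def
proof (rule sum_less_by_majority[OF finite_S])
  have cV: "c \<in> V" using K by (auto simp: is_clique_def)
  obtain z where z: "z \<noteq> c" "H c = component_avoiding c z" using H_component[OF cV] by blast
  have finK': "finite K'" using K'(1) by (rule finite_clique)
  show "\<forall>s\<in>S \<inter> H c. dist_to s K' < dist_to s K"
    using dist_to_less_across_cut[OF K cut[unfolded z(2)] _ _ z(1) finK'] K'(2) z(2) S_subset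
    by auto
  show "\<forall>s\<in>S - H c. dist_to s K' \<le> Suc (dist_to s K)"
    using dist_to_le_Suc[OF K _ finK'] K'(2) S_subset by auto
  obtain a where "S - H c \<subseteq> {a}" using H_heavy[OF cV] by blast
  then have "card (S - H c) \<le> 1" using card_mono[of "{a}"] by fastforce
  moreover have "card S = card (S \<inter> H c) + card (S - H c)"
    using finite_S by (rule card_Int_Diff)
  ultimately show "card (S - H c) < card (S \<inter> H c)" using three_le_card by linarith
qed

lemma central_clique_exists:
  obtains K where "maximal_clique V E K" "\<forall>c\<in>K. K - {c} \<subseteq> H c"
proof -
  obtain K0 where "maximal_clique V E K0"
    using maximal_clique_exists[of "{}"] by (auto simp: is_clique_def)
  then obtain K where K: "maximal_clique V E K"
    and min: "\<And>K'. maximal_clique V E K' \<Longrightarrow> total_dist K \<le> total_dist K'"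
    using ex_has_least_nat[of "maximal_clique V E" K0 total_dist] by metis
  have Kc: "is_clique V E K" using K by (simp add: maximal_clique_def)
  have "K - {c} \<subseteq> H c" if "c \<in> K" for c
  proof (rule ccontr)
    assume "\<not> K - {c} \<subseteq> H c"
    moreover have cV: "c \<in> V" using Kc that by (auto simp: is_clique_def)
    moreover obtain z where "H c = component_avoiding c z" using H_component[OF cV] by blast
    ultimately have cut: "(K - {c}) \<inter> H c = {}" using clique_off_component[OF Kc that] by simp
    obtain K' where K': "maximal_clique V E K'" "insert c {b \<in> H c. E b c} \<subseteq> K'"
      using maximal_clique_exists[OF neighbours_across_cut_clique[OF cV, of z]] \<open>H c = _\<close>
      by metis
    then have "total_dist K' < total_dist K"
      using total_dist_decreases[OF Kc that cut] by (simp add: maximal_clique_def)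
    then show False using min[OF K'(1)] by simp
  qed
  then show ?thesis using that K by blast
qed

lemma central_clique_separates:
  assumes K: "maximal_clique V E K" "\<forall>c\<in>K. K - {c} \<subseteq> H c" and s: "s \<in> V" "s \<notin> K"
  obtains c where "c \<in> K" "s \<notin> H c"
proof -
  have Kc: "is_clique V E K" using K by (simp add: maximal_clique_def)
  obtain c where c: "c \<in> K" "\<forall>y\<in>K. dist s c \<le> dist s y"
    by (rule nearest_exists[OF finite_clique[OF Kc] maximal_clique_ne[OF K(1)]])
  have cV: "c \<in> V" using Kc c(1) by (auto simp: is_clique_def)
  obtain m where m: "dist s c = Suc m"
    using dist_eq_0_iff[OF s(1) cV] s(2) c(1) not0_implies_Suc by blast
  obtain a where a: "E a c" "dist s a = m" using dist_Suc_pred[OF s(1) cV m] .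
  have aV: "a \<in> V" using a(1) edge_in_V by blast
  have "a \<notin> K"
  proof
    assume "a \<in> K"
    then have "dist s c \<le> m" using c(2) a(2) by metis
    then show False using m by simp
  qed
  then obtain y where y: "y \<in> K" "y \<noteq> a" "\<not> E a y"
    using maximal_clique_nonadjacent[OF K(1) aV] by blast
  have "y \<noteq> c" using a(1) y(3) by blast
  then have "E c y" using Kc c(1) y(1) by (simp add: is_clique_def)
  then have sep: "\<not> (adj_in E (V - {c}))\<^sup>*\<^sup>* a y"
    using common_neighbour_separates[OF edge_sym[OF a(1)]] y(2,3) by blast
  have "(adj_in E (V - {c}))\<^sup>*\<^sup>* s a"
    using rtranclp_avoiding_farther[OF s(1) aV] edge_ne[OF a(1)] a(2) m by simp
  then have a_s: "(adj_in E (V - {c}))\<^sup>*\<^sup>* a s" by (rule rtranclp_adj_in_sym[OF symp_E])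
  have "y \<in> H c" using K(2) c(1) y(1) \<open>y \<noteq> c\<close> by blast
  have "s \<notin> H c"
  proof
    assume "s \<in> H c"
    then have "(adj_in E (V - {c}))\<^sup>*\<^sup>* s y" using H_connected[OF cV _ \<open>y \<in> H c\<close>] by blast
    with a_s have "(adj_in E (V - {c}))\<^sup>*\<^sup>* a y" by (rule rtranclp_trans)
    with sep show False by contradiction
  qed
  then show ?thesis using that c(1) by blast
qed

text \<open>Each robot outside a central clique \<open>K\<close> is charged to a vertex \<open>c\<close> of \<open>K\<close> whose
  light side contains it; the light side of \<open>c\<close> holds at most one robot, counting \<open>c\<close>.\<close>

lemma card_le_central_clique:
  assumes K: "maximal_clique V E K" "\<forall>c\<in>K. K - {c} \<subseteq> H c"
  shows "card S \<le> card K"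
proof -
  have KV: "K \<subseteq> V" using K by (simp add: maximal_clique_def is_clique_def)
  define f where "f s = (if s \<in> K then s else (SOME c. c \<in> K \<and> s \<notin> H c))" for s
  have f: "f s \<in> K \<and> s \<notin> H (f s)" if "s \<in> S" for s
  proof (cases "s \<in> K")
    case True
    then have "f s = s" by (simp add: f_def)
    then show ?thesis using True H_not_self[of s] KV by auto
  next
    case False
    then have "\<exists>c. c \<in> K \<and> s \<notin> H c"
      using central_clique_separates[OF K] S_subset that by blast
    then have "(SOME c. c \<in> K \<and> s \<notin> H c) \<in> K \<and> s \<notin> H (SOME c. c \<in> K \<and> s \<notin> H c)"
      by (rule someI_ex)
    then show ?thesis unfolding f_def using False by simp
  qed
  have "inj_on f S"
  proof (rule inj_onI)
    fix s t assume st: "s \<in> S" "t \<in> S" "f s = f t"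
    then have "s \<in> S - H (f s)" "t \<in> S - H (f s)" using f[OF st(1)] f[OF st(2)] by simp_all
    moreover obtain a where "S - H (f s) \<subseteq> {a}" using H_heavy f[OF st(1)] KV by blast
    ultimately show "s = t" by blast
  qed
  moreover have "f ` S \<subseteq> K" using f by blast
  moreover have "finite K" using K(1) finite_clique by (simp add: maximal_clique_def)
  ultimately show ?thesis by (rule card_inj_on_le)
qed

end

context blk_graph
begin

lemma small_set_card_le_clique:
  assumes "S \<subseteq> V" "card S \<le> 2"
  obtains K where "is_clique V E K" "card S \<le> card K"
proof (cases "card S \<le> 1")
  case True
  obtain v where "v \<in> V" using V_ne by blast
  then show ?thesis using that[of "{v}"] True by (simp add: is_clique_def)
next
  case False
  then obtain s t where st: "S = {s, t}" "s \<noteq> t" using assms(2) card_2_iff[of S] by auto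
  then have "(adj_in E V)\<^sup>*\<^sup>* s t" using assms(1) rtranclp_adj_in_V by auto
  then obtain y where "adj_in E V s y" using st(2) by (metis converse_rtranclpE)
  then have "is_clique V E {s, y}" "card {s, y} = 2"
    using edge_ne edge_sym by (auto simp: adj_in_def is_clique_def)
  then show ?thesis using that st by simp
qed

theorem mobile_card_le_clique:
  assumes "mobile_gp_set V E S"
  obtains K where "is_clique V E K" "card S \<le> card K"
proof -
  have SV: "S \<subseteq> V" using assms by (simp add: mobile_gp_set_def gp_set_def)
  show ?thesis
  proof (cases "3 \<le> card S")
    case True
    have "\<forall>x\<in>V. \<exists>z. z \<noteq> x \<and> (\<exists>a. S - component_avoiding x z \<subseteq> {a})"
      using mobile_one_outside[OF assms True] by metis
    then obtain z where z: "\<forall>x\<in>V. z x \<noteq> x \<and> (\<exists>a. S - component_avoiding x (z x) \<subseteq> {a})"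
      by metis
    interpret one_sided V E S "\<lambda>x. component_avoiding x (z x)"
      using SV True z by unfold_locales auto
    obtain K where "maximal_clique V E K" "\<forall>c\<in>K. K - {c} \<subseteq> component_avoiding c (z c)"
      by (rule central_clique_exists)
    then show ?thesis using that card_le_central_clique by (auto simp: maximal_clique_def)
  next
    case False
    then have "card S \<le> 2" by simp
    then obtain K where "is_clique V E K" "card S \<le> card K"
      by (rule small_set_card_le_clique[OF SV])
    then show ?thesis by (rule that)
  qed
qed

end

theorem theorem2p2:
  fixes V :: "'a set" and E :: "'a \<Rightarrow> 'a \<Rightarrow> bool"
  assumes "block_graph V E"
  shows "mob V E = clique_number V E"
proof -
  interpret blk_graph V E
    using assms by unfold_locales (auto simp: block_graph_def)
  obtain K where K: "is_clique V E K" "card K = clique_number V E"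
    and maximum: "\<forall>K'. is_clique V E K' \<longrightarrow> card K' \<le> card K"
    by (rule maximum_clique_exists)
  have "mobile_gp_set V E K"
    using K(1) maximum by (intro maximal_clique_mobile maximum_clique_is_maximal)
  moreover have bound: "card S \<le> card K" if S: "mobile_gp_set V E S" for S
  proof -
    obtain K' where "is_clique V E K'" "card S \<le> card K'" by (rule mobile_card_le_clique[OF S])
    then show ?thesis using maximum by (meson order_trans)
  qed
  moreover have "{card S | S. mobile_gp_set V E S} \<subseteq> {..card K}" using bound by auto
  then have "finite {card S | S. mobile_gp_set V E S}" by (rule finite_subset) simp
  ultimately have "mob V E = card K" unfolding mob_def by (intro Max_eqI) auto
  with K(2) show ?thesis by simp
qed

end
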